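(* Let $\mathbf X\in\mathbb R^{n\times p}$, $\boldsymbol\beta\in\mathbb R^p$ with support $S=\{j:\beta_j\neq0\}$, $\sigma>0$, and let $\check{\boldsymbol\beta}\in\mathbb R^p$ satisfy $\mathrm{sgn}(\check{\boldsymbol\beta})=\mathrm{sgn}(\boldsymbol\beta)$ componentwise. For $t\in[0,1)$ and $\lambda>0$ let $\Lambda_{\lambda,t}$ be the set of $\boldsymbol\zeta\in\mathbb R^n$ for which there is a Lasso solution $\hat{\boldsymbol\beta}=\hat{\boldsymbol\beta}_\lambda(\boldsymbol\beta,\sigma\boldsymbol\zeta)$ with $\mathrm{sgn}(\hat{\boldsymbol\beta}_S)=\mathrm{sgn}(\boldsymbol\beta_S)$ and $\min_{j\in S}\hat\beta_j/\beta_j>t$. Suppose $\check\sigma>0$ satisfies $$0<\check\sigma/\sigma<\min_{j\in S}\frac{\check\beta_j}{(1-t)\beta_j}.$$ Then for every $\boldsymbol\zeta\in\Lambda_{\lambda,t}$ for which the residuals below are well-defined (nonzero denominators), $\hat{\mathbf R}_\lambda(\boldsymbol\beta,\sigma\boldsymbol\zeta)=\hat{\mathbf R}_\lambda(\check{\boldsymbol\beta},\check\sigma\boldsymbol\zeta)$.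
   Context: For $\mathbf b_0\in\mathbb R^p$, $\mathbf w\in\mathbb R^n$ and $\lambda>0$, a (square-root) Lasso solution is any $\hat{\boldsymbol\beta}_\lambda(\mathbf b_0,\mathbf w)\in\arg\min_{\mathbf b\in\mathbb R^p}\{\|\mathbf X(\mathbf b_0-\mathbf b)+\mathbf w\|_2/\sqrt n+\lambda\|\mathbf b\|_1\}$, i.e. a square-root Lasso fit of the response $\mathbf X\mathbf b_0+\mathbf w$ on $\mathbf X$; the fitted values $\mathbf X\hat{\boldsymbol\beta}_\lambda$ are unique even if the minimiser is not. The scaled Lasso residuals are $\hat{\mathbf R}_\lambda(\mathbf b_0,\mathbf w)=\{\mathbf X(\mathbf b_0-\hat{\boldsymbol\beta}_\lambda(\mathbf b_0,\mathbf w))+\mathbf w\}/\|\mathbf X(\mathbf b_0-\hat{\boldsymbol\beta}_\lambda(\mathbf b_0,\mathbf w))+\mathbf w\|_2$. For a vector $\mathbf b$ and $A\subseteq\{1,\dots,p\}$, $\mathbf b_A$ is the subvector indexed by $A$; $\mathrm{sgn}$ is applied componentwise. *)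

theory Defs
  imports "HOL-Analysis.Analysis"
begin

definition l1norm :: "real^'p \<Rightarrow> real" where
  "l1norm b = (\<Sum>j\<in>UNIV. \<bar>b $ j\<bar>)"

text \<open>Square-root Lasso objective for response X b0 + w.\<close>
definition sqrt_lasso_obj ::
  "real^'p^'n \<Rightarrow> real \<Rightarrow> real^'p \<Rightarrow> real^'n \<Rightarrow> real^'p \<Rightarrow> real" where
  "sqrt_lasso_obj X lam b0 w b =
     norm (X *v (b0 - b) + w) / sqrt (real CARD('n)) + lam * l1norm b"

definition is_lasso_sol ::
  "real^'p^'n \<Rightarrow> real \<Rightarrow> real^'p \<Rightarrow> real^'n \<Rightarrow> real^'p \<Rightarrow> bool" where
  "is_lasso_sol X lam b0 w b \<longleftrightarrow>
     (\<forall>b'. sqrt_lasso_obj X lam b0 w b \<le> sqrt_lasso_obj X lam b0 w b')"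

text \<open>Unscaled residual X(b0 - b) + w for a candidate solution b.\<close>
definition lasso_resid ::
  "real^'p^'n \<Rightarrow> real^'p \<Rightarrow> real^'n \<Rightarrow> real^'p \<Rightarrow> real^'n" where
  "lasso_resid X b0 w b = X *v (b0 - b) + w"

definition supp :: "real^'p \<Rightarrow> 'p set" where
  "supp b = {j. b $ j \<noteq> 0}"

definition Lambda_set ::
  "real^'p^'n \<Rightarrow> real \<Rightarrow> real \<Rightarrow> real^'p \<Rightarrow> real \<Rightarrow> (real^'n) set" where
  "Lambda_set X lam t beta sig =
     {zeta. \<exists>bh. is_lasso_sol X lam beta (sig *\<^sub>R zeta) bh
              \<and> (\<forall>j\<in>supp beta. sgn (bh $ j) = sgn (beta $ j))
              \<and> (\<forall>j\<in>supp beta. bh $ j / beta $ j > t)}"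

end

theory Submission
  imports Defs
begin

text \<open>The square-root Lasso objective is convex, so any two solutions have residuals on a common
  ray (the norm part must be affine along the segment between them) and hence the same scaled
  residual. On the open region where every coordinate ratio \<open>x\<^sub>j / \<beta>\<^sub>j\<close> exceeds \<open>t\<close>, the map
  \<open>x \<mapsto> c x + (\<beta>\<^sub>c - c \<beta>)\<close> with \<open>c = \<sigma>\<^sub>c / \<sigma>\<close> keeps the sign of every coordinate in the support,
  so it transforms the objective for \<open>(\<beta>, \<sigma> \<zeta>)\<close> into \<open>c\<close> times itself plus a constant for
  \<open>(\<beta>\<^sub>c, \<sigma>\<^sub>c \<zeta>)\<close>, and multiplies residuals by \<open>c\<close>. A solution in that region is therefore a local,
  hence global, minimiser of the transformed problem with a proportional residual.\<close>

lemma lasso_resid_convex_combination: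
  fixes X :: "real^'p^'n"
  shows "lasso_resid X b0 w ((1 - s) *\<^sub>R x + s *\<^sub>R y)
       = (1 - s) *\<^sub>R lasso_resid X b0 w x + s *\<^sub>R lasso_resid X b0 w y"
  unfolding lasso_resid_def by (simp add: vec.diff vec.add vec.scale algebra_simps)

lemma convex_on_l1norm: "convex_on UNIV l1norm"
proof
  fix s :: real and x y :: "real^'p"
  assume s: "0 < s" "s < 1"
  have "\<bar>(1 - s) * x$j + s * y$j\<bar> \<le> (1 - s) * \<bar>x$j\<bar> + s * \<bar>y$j\<bar>" for j
    using s abs_triangle_ineq[of "(1 - s) * x$j" "s * y$j"] by (simp add: abs_mult)
  then have "l1norm ((1 - s) *\<^sub>R x + s *\<^sub>R y) \<le> (\<Sum>j\<in>UNIV. (1 - s) * \<bar>x$j\<bar> + s * \<bar>y$j\<bar>)"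
    unfolding l1norm_def by (simp add: sum_mono)
  then show "l1norm ((1 - s) *\<^sub>R x + s *\<^sub>R y) \<le> (1 - s) * l1norm x + s * l1norm y"
    unfolding l1norm_def by (simp add: sum.distrib sum_distrib_left)
qed simp

lemma convex_on_sqrt_lasso_obj:
  fixes X :: "real^'p^'n"
  assumes "0 \<le> lam"
  shows "convex_on UNIV (sqrt_lasso_obj X lam b0 w)"
proof -
  have "convex_on UNIV (\<lambda>b. norm (lasso_resid X b0 w b))"
  proof
    fix s :: real and x y :: "real^'p"
    assume "0 < s" "s < 1"
    then show "norm (lasso_resid X b0 w ((1 - s) *\<^sub>R x + s *\<^sub>R y))
        \<le> (1 - s) * norm (lasso_resid X b0 w x) + s * norm (lasso_resid X b0 w y)"
      unfolding lasso_resid_convex_combination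
      by (smt (verit) norm_scaleR norm_triangle_ineq)
  qed simp
  then show ?thesis
    unfolding sqrt_lasso_obj_def lasso_resid_def[symmetric]
    using convex_on_l1norm assms by (intro convex_on_add convex_on_cdiv convex_on_cmul) auto
qed

lemma is_lasso_sol_convex_combination:
  fixes X :: "real^'p^'n"
  assumes "0 \<le> lam" "is_lasso_sol X lam b0 w x" "is_lasso_sol X lam b0 w y" "0 \<le> s" "s \<le> 1"
  shows "is_lasso_sol X lam b0 w ((1 - s) *\<^sub>R x + s *\<^sub>R y)"
  unfolding is_lasso_sol_def
proof
  fix b
  let ?f = "sqrt_lasso_obj X lam b0 w"
  have "?f ((1 - s) *\<^sub>R x + s *\<^sub>R y) \<le> (1 - s) * ?f x + s * ?f y"
    using convex_onD[OF convex_on_sqrt_lasso_obj[OF assms(1)]] assms(4,5) by simp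
  also have "\<dots> \<le> (1 - s) * ?f b + s * ?f b"
    using assms(2-5) unfolding is_lasso_sol_def by (intro add_mono mult_left_mono) auto
  finally show "?f ((1 - s) *\<^sub>R x + s *\<^sub>R y) \<le> ?f b"
    by (simp add: algebra_simps)
qed

lemma lasso_sol_resid_norm_add:
  fixes X :: "real^'p^'n"
  assumes "0 \<le> lam" "is_lasso_sol X lam b0 w x" "is_lasso_sol X lam b0 w y"
  shows "norm (lasso_resid X b0 w x + lasso_resid X b0 w y)
       = norm (lasso_resid X b0 w x) + norm (lasso_resid X b0 w y)"
proof -
  let ?r = "lasso_resid X b0 w x" and ?s = "lasso_resid X b0 w y"
  let ?f = "sqrt_lasso_obj X lam b0 w"
  let ?q = "sqrt (real CARD('n))"
  let ?m = "(1 - 1/2) *\<^sub>R x + (1/2) *\<^sub>R y"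
  have "?f x \<le> ?f ?m" "?f x \<le> ?f y" "?f y \<le> ?f x"
    using assms(2,3) unfolding is_lasso_sol_def by auto
  moreover have "?f ?m = norm (?r + ?s) / ?q / 2 + lam * l1norm ?m"
  proof -
    have "lasso_resid X b0 w ?m = (1/2) *\<^sub>R (?r + ?s)"
      unfolding lasso_resid_convex_combination by (simp add: algebra_simps)
    then show ?thesis
      unfolding sqrt_lasso_obj_def lasso_resid_def[symmetric] by simp
  qed
  moreover have "?f x = norm ?r / ?q + lam * l1norm x" "?f y = norm ?s / ?q + lam * l1norm y"
    unfolding sqrt_lasso_obj_def lasso_resid_def by simp_all
  moreover have "lam * l1norm ?m \<le> lam * ((1 - 1/2) * l1norm x + (1/2) * l1norm y)"
    using convex_onD[OF convex_on_l1norm, of "1/2" x y] assms(1) by (simp add: mult_left_mono)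
  ultimately have "norm ?r / ?q + norm ?s / ?q \<le> norm (?r + ?s) / ?q"
    by (simp add: algebra_simps)
  then have "norm ?r + norm ?s \<le> norm (?r + ?s)"
    by (simp add: divide_le_cancel flip: add_divide_distrib)
  then show ?thesis
    using norm_triangle_ineq[of ?r ?s] by linarith
qed

lemma lasso_sol_resid_parallel:
  fixes X :: "real^'p^'n"
  assumes "0 \<le> lam" "is_lasso_sol X lam b0 w x" "is_lasso_sol X lam b0 w y"
  shows "norm (lasso_resid X b0 w x) *\<^sub>R lasso_resid X b0 w y
       = norm (lasso_resid X b0 w y) *\<^sub>R lasso_resid X b0 w x"
  using lasso_sol_resid_norm_add[OF assms] by (simp only: norm_triangle_eq)

lemma sgn_eq_if_norm_scaleR_eq:
  fixes x y :: "'a::real_normed_vector"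
  assumes "x \<noteq> 0" "y \<noteq> 0" "norm x *\<^sub>R y = norm y *\<^sub>R x"
  shows "sgn x = sgn y"
proof -
  have "y = (norm y / norm x) *\<^sub>R x"
    using arg_cong[OF assms(3), of "scaleR (1 / norm x)"] assms(1) by simp
  then have "sgn y = sgn (norm y / norm x) *\<^sub>R sgn x"
    by (metis sgn_scaleR)
  then show ?thesis
    using assms(1,2) by simp
qed

lemma lasso_sol_sgn_resid_eq:
  fixes X :: "real^'p^'n"
  assumes "0 \<le> lam" "is_lasso_sol X lam b0 w x" "is_lasso_sol X lam b0 w y"
    and "lasso_resid X b0 w x \<noteq> 0" "lasso_resid X b0 w y \<noteq> 0"
  shows "sgn (lasso_resid X b0 w x) = sgn (lasso_resid X b0 w y)"
  using sgn_eq_if_norm_scaleR_eq[OF assms(4,5) lasso_sol_resid_parallel[OF assms(1-3)]] .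

text \<open>The residual of \<open>x\<close> may vanish; moving slightly towards a solution with nonzero residual
  repairs this, because the two residuals lie on a common ray.\<close>

lemma lasso_sol_nonzero_resid_in_open:
  fixes X :: "real^'p^'n"
  assumes "0 \<le> lam" "open A" "x \<in> A" "is_lasso_sol X lam b0 w x"
    and "is_lasso_sol X lam b0 w y" "lasso_resid X b0 w y \<noteq> 0"
  obtains u where "u \<in> A" "is_lasso_sol X lam b0 w u" "lasso_resid X b0 w u \<noteq> 0"
proof -
  let ?r = "lasso_resid X b0 w x" and ?s = "lasso_resid X b0 w y"
  define a where "a = norm ?r / norm ?s"
  have r: "?r = a *\<^sub>R ?s"
    using arg_cong[OF lasso_sol_resid_parallel[OF assms(1,4,5)], of "scaleR (1 / norm ?s)"] assms(6)
    unfolding a_def by simp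
  have "((\<lambda>s. (1 - s) *\<^sub>R x + s *\<^sub>R y) \<longlongrightarrow> (1 - 0) *\<^sub>R x + 0 *\<^sub>R y) (at_right 0)"
    by (intro tendsto_intros)
  then have "((\<lambda>s. (1 - s) *\<^sub>R x + s *\<^sub>R y) \<longlongrightarrow> x) (at_right 0)"
    by simp
  from topological_tendstoD[OF this assms(2,3)] eventually_at_right_real[of 0 1]
  have "eventually (\<lambda>s. (1 - s) *\<^sub>R x + s *\<^sub>R y \<in> A \<and> s \<in> {0<..<1}) (at_right 0)"
    by (rule eventually_conj) simp
  then obtain s where s: "(1 - s) *\<^sub>R x + s *\<^sub>R y \<in> A" "0 < s" "s < 1"
    using eventually_happens'[OF trivial_limit_at_right_real] by auto
  have "lasso_resid X b0 w ((1 - s) *\<^sub>R x + s *\<^sub>R y) = ((1 - s) * a + s) *\<^sub>R ?s"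
    unfolding lasso_resid_convex_combination r by (simp add: scaleR_add_left)
  moreover have "(1 - s) * a + s > 0"
    using s unfolding a_def by (simp add: add_nonneg_pos)
  ultimately show ?thesis
    using that[OF s(1)] is_lasso_sol_convex_combination[OF assms(1,4,5), of s] s(2,3) assms(6)
    by simp
qed

definition ratio_gt_set :: "real^'p \<Rightarrow> real \<Rightarrow> (real^'p) set" where
  "ratio_gt_set beta t = {x. \<forall>j\<in>supp beta. t < x $ j / beta $ j}"

lemma open_ratio_gt_set: "open (ratio_gt_set beta t)"
proof -
  have "ratio_gt_set beta t = (\<Inter>j\<in>supp beta. {x. t < x $ j / beta $ j})"
    unfolding ratio_gt_set_def by auto
  then show ?thesis
    by (auto simp: supp_def intro!: open_Collect_less continuous_intros)
qed

lemma abs_shifted_coordinate: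
  fixes c t b bc x :: real
  assumes "0 < c" "0 \<le> t" "t < 1" "b \<noteq> 0" "t < x / b" "c < bc / ((1 - t) * b)"
  shows "\<bar>c * x + (bc - c * b)\<bar> = c * \<bar>x\<bar> + sgn b * (bc - c * b)"
proof (cases "b > 0")
  case True
  have xb: "t * b < x" using assms(5) True by (simp add: pos_less_divide_eq)
  have "c * ((1 - t) * b) < bc" using assms(3,6) True by (simp add: pos_less_divide_eq)
  moreover have "c * (b - x) < c * ((1 - t) * b)"
    using xb assms(1) by (intro mult_strict_left_mono) (auto simp: algebra_simps)
  ultimately have "c * x + (bc - c * b) > 0" by (simp add: algebra_simps)
  moreover have "x > 0" using xb assms(2) True by (smt (verit) mult_nonneg_nonneg)
  ultimately show ?thesis using True assms(1) by simp
next
  case False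
  then have "b < 0" using assms(4) by simp
  have xb: "x < t * b" using assms(5) \<open>b < 0\<close> by (simp add: neg_less_divide_eq)
  have "bc < c * ((1 - t) * b)"
    using assms(3,6) \<open>b < 0\<close> by (simp add: neg_less_divide_eq mult_pos_neg)
  moreover have "c * ((1 - t) * b) < c * (b - x)"
    using xb assms(1) by (intro mult_strict_left_mono) (auto simp: algebra_simps)
  ultimately have "c * x + (bc - c * b) < 0" by (simp add: algebra_simps)
  moreover have "x < 0" using xb assms(2) \<open>b < 0\<close> by (smt (verit) mult_nonneg_nonpos)
  ultimately show ?thesis using \<open>b < 0\<close> assms(1) by simp
qed

lemma lasso_resid_shift:
  fixes X :: "real^'p^'n"
  shows "lasso_resid X betac (c *\<^sub>R w) (c *\<^sub>R x + (betac - c *\<^sub>R beta))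
       = c *\<^sub>R lasso_resid X beta w x"
proof -
  have "betac - (c *\<^sub>R x + (betac - c *\<^sub>R beta)) = c *\<^sub>R (beta - x)"
    by (simp add: algebra_simps)
  then show ?thesis
    unfolding lasso_resid_def by (simp add: matrix_vector_mult_scaleR scaleR_right_distrib)
qed

lemma sqrt_lasso_obj_shift:
  fixes X :: "real^'p^'n" and beta betac :: "real^'p"
  assumes c: "0 < c" and sgn: "\<forall>j. sgn (betac $ j) = sgn (beta $ j)"
    and t: "0 \<le> t" "t < 1"
    and gap: "\<forall>j\<in>supp beta. c < betac $ j / ((1 - t) * beta $ j)"
    and x: "x \<in> ratio_gt_set beta t"
  shows "sqrt_lasso_obj X lam betac (c *\<^sub>R w) (c *\<^sub>R x + (betac - c *\<^sub>R beta))
       = c * sqrt_lasso_obj X lam beta w x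
         + lam * (\<Sum>j\<in>UNIV. sgn (beta $ j) * (betac $ j - c * beta $ j))"
proof -
  have "\<bar>c * x$j + (betac$j - c * beta$j)\<bar> = c * \<bar>x$j\<bar> + sgn (beta$j) * (betac$j - c * beta$j)"
    for j
  proof (cases "beta $ j = 0")
    case True
    then show ?thesis
      using sgn c by (metis abs_mult abs_of_pos add.right_neutral diff_zero mult_zero_right sgn_0_0)
  next
    case False
    then show ?thesis
      using abs_shifted_coordinate[OF c t False] x gap
      unfolding ratio_gt_set_def supp_def by simp
  qed
  then have "l1norm (c *\<^sub>R x + (betac - c *\<^sub>R beta))
      = c * l1norm x + (\<Sum>j\<in>UNIV. sgn (beta $ j) * (betac $ j - c * beta $ j))"
    unfolding l1norm_def by (simp add: sum.distrib sum_distrib_left)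
  then show ?thesis
    using lasso_resid_shift[of X betac c w x beta] c
    unfolding sqrt_lasso_obj_def lasso_resid_def[symmetric]
    by (simp add: algebra_simps)
qed

lemma is_lasso_sol_shift:
  fixes X :: "real^'p^'n" and beta betac :: "real^'p"
  assumes lam: "0 \<le> lam" and c: "0 < c" and sgn: "\<forall>j. sgn (betac $ j) = sgn (beta $ j)"
    and t: "0 \<le> t" "t < 1"
    and gap: "\<forall>j\<in>supp beta. c < betac $ j / ((1 - t) * beta $ j)"
    and x: "x \<in> ratio_gt_set beta t" "is_lasso_sol X lam beta w x"
  shows "is_lasso_sol X lam betac (c *\<^sub>R w) (c *\<^sub>R x + (betac - c *\<^sub>R beta))"
proof -
  define d where "d = betac - c *\<^sub>R beta"
  define g where "g y = (1 / c) *\<^sub>R (y - d)" for y :: "real^'p"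
  let ?v = "c *\<^sub>R x + d"
  let ?G = "sqrt_lasso_obj X lam betac (c *\<^sub>R w)"
  have shift: "?G y = c * sqrt_lasso_obj X lam beta w (g y)
      + lam * (\<Sum>j\<in>UNIV. sgn (beta $ j) * (betac $ j - c * beta $ j))"
    if "g y \<in> ratio_gt_set beta t" for y
    using sqrt_lasso_obj_shift[OF c sgn t gap that, of X lam w] c
    unfolding g_def d_def by simp
  have "open (g -` ratio_gt_set beta t)"
    unfolding g_def by (intro continuous_open_vimage open_ratio_gt_set continuous_intros)
  moreover have "g ?v = x"
    unfolding g_def using c by simp
  ultimately obtain e where e: "0 < e" "ball ?v e \<subseteq> g -` ratio_gt_set beta t"
    using x(1) by (metis openE vimageI)
  have "?G ?v \<le> ?G y" if "y \<in> ball ?v e" for y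
  proof -
    have "sqrt_lasso_obj X lam beta w x \<le> sqrt_lasso_obj X lam beta w (g y)"
      using x(2) unfolding is_lasso_sol_def by blast
    then show ?thesis
      using shift[of ?v] shift[of y] \<open>g ?v = x\<close> x(1) e(2) that c by auto
  qed
  then show ?thesis
    using convex_local_global_minimum[OF e(1) convex_on_sqrt_lasso_obj[OF lam]]
    unfolding is_lasso_sol_def d_def by blast
qed

theorem theorem1:
  fixes X :: "real^'p^'n" and beta betac :: "real^'p" and zeta :: "real^'n"
    and sig sigc lam t :: real and b1 b2 :: "real^'p"
  assumes "sig > 0"
    and "\<forall>j. sgn (betac $ j) = sgn (beta $ j)"
    and "0 \<le> t" and "t < 1" and "lam > 0"
    and "sigc > 0"
    and "0 < sigc / sig"
    and "\<forall>j\<in>supp beta. sigc / sig < betac $ j / ((1 - t) * beta $ j)"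
    and "zeta \<in> Lambda_set X lam t beta sig"
    and "is_lasso_sol X lam beta (sig *\<^sub>R zeta) b1"
    and "is_lasso_sol X lam betac (sigc *\<^sub>R zeta) b2"
    and "lasso_resid X beta (sig *\<^sub>R zeta) b1 \<noteq> 0"
    and "lasso_resid X betac (sigc *\<^sub>R zeta) b2 \<noteq> 0"
  shows "(1 / norm (lasso_resid X beta (sig *\<^sub>R zeta) b1)) *\<^sub>R lasso_resid X beta (sig *\<^sub>R zeta) b1
       = (1 / norm (lasso_resid X betac (sigc *\<^sub>R zeta) b2)) *\<^sub>R lasso_resid X betac (sigc *\<^sub>R zeta) b2"
proof -
  define c where "c = sigc / sig"
  define w where "w = sig *\<^sub>R zeta"
  have wc: "sigc *\<^sub>R zeta = c *\<^sub>R w"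
    using assms(1) unfolding c_def w_def by simp
  have c: "0 < c" using assms(7) unfolding c_def .
  have lam: "0 \<le> lam" using assms(5) by simp
  obtain bh where "bh \<in> ratio_gt_set beta t" "is_lasso_sol X lam beta w bh"
    using assms(9) unfolding Lambda_set_def ratio_gt_set_def w_def by auto
  then obtain u where u: "u \<in> ratio_gt_set beta t" "is_lasso_sol X lam beta w u"
      "lasso_resid X beta w u \<noteq> 0"
    using lasso_sol_nonzero_resid_in_open[OF lam open_ratio_gt_set] assms(10,12)
    unfolding w_def by metis
  define v where "v = c *\<^sub>R u + (betac - c *\<^sub>R beta)"
  have v: "is_lasso_sol X lam betac (c *\<^sub>R w) v"
    using is_lasso_sol_shift[OF lam c assms(2-4) _ u(1,2)] assms(8)
    unfolding v_def c_def by blast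
  have "sgn (lasso_resid X beta w b1) = sgn (lasso_resid X beta w u)"
    using lasso_sol_sgn_resid_eq[OF lam _ u(2) _ u(3)] assms(10,12) unfolding w_def by blast
  also have "\<dots> = sgn (lasso_resid X betac (c *\<^sub>R w) v)"
    using c unfolding v_def lasso_resid_shift by (simp add: sgn_scaleR)
  also have "\<dots> = sgn (lasso_resid X betac (sigc *\<^sub>R zeta) b2)"
    using lasso_sol_sgn_resid_eq[OF lam v assms(11)[unfolded wc]] assms(13)[unfolded wc]
      u(3) c unfolding v_def lasso_resid_shift wc by simp
  finally show ?thesis
    unfolding w_def by (simp add: sgn_div_norm divide_inverse_commute)
qed

end
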